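(* Let $\mathbb{T}=\mathbb{R}/\mathbb{Z}$. There exists a constant $C>0$, independent of the meshes and of $g$, such that $$\|\mathcal{P}_hg\|_{H^2_{h,\Delta t}(\mathbb{T})}\le(1+C\Delta t)\|g\|_{H^2_{h,\Delta t}(\mathbb{T})}\quad\text{for all }g\in H^2(\mathbb{T}).$$
   Context: Temporal mesh $0=t^0<\dots<t^N=T$, $\Delta t=\max_n(t^{n+1}-t^n)<1$. Spatial mesh $0=x_0<\dots<x_M=1$, $h=\max_j(x_{j+1}-x_j)$. $V_h^{2,3}$: $C^2(\mathbb{T})$ functions, cubic on each $[x_j,x_{j+1}]$. $\mathcal{P}_h:C^0(\mathbb{T})\to V_h^{2,3}$: $(\mathcal{P}_hg)(x_j)=g(x_j)$, $j=0,\dots,M-1$. $\|g\|_{H^2_{h,\Delta t}(\mathbb{T})}=\big(\|g\|_{L^2(\mathbb{T})}^2+\tfrac{h^4}{\Delta t}\|g''\|_{L^2(\mathbb{T})}^2\big)^{1/2}$. *)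

theory Defs
  imports "HOL-Analysis.Analysis"
begin

text \<open>Functions on the torus T = R/Z are represented as 1-periodic functions real => real.\<close>

definition periodic1 :: "(real \<Rightarrow> real) \<Rightarrow> bool" where
  "periodic1 f \<longleftrightarrow> (\<forall>x. f (x + 1) = f x)"

definition L2_T :: "(real \<Rightarrow> real) \<Rightarrow> bool" where
  "L2_T f \<longleftrightarrow> f absolutely_integrable_on {0..1} \<and> (\<lambda>x. (f x)\<^sup>2) integrable_on {0..1}"

definition L2_norm_T :: "(real \<Rightarrow> real) \<Rightarrow> real" where
  "L2_norm_T f = sqrt (integral {0..1} (\<lambda>x. (f x)\<^sup>2))"

text \<open>H^2(T): g is 1-periodic, continuously differentiable with derivative g1, and g1 is
  absolutely continuous with a.e.-derivative g2 in L^2(T) (g1 b - g1 a = integral of g2 over [a,b]).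
  Then g2 is the (weak) second derivative g''.\<close>
definition H2_T :: "(real \<Rightarrow> real) \<Rightarrow> (real \<Rightarrow> real) \<Rightarrow> (real \<Rightarrow> real) \<Rightarrow> bool" where
  "H2_T g g1 g2 \<longleftrightarrow> periodic1 g \<and> periodic1 g2 \<and> L2_T g2 \<and>
     (\<forall>x. (g has_real_derivative g1 x) (at x)) \<and>
     (\<forall>a b. a \<le> b \<longrightarrow> (g2 has_integral (g1 b - g1 a)) {a..b})"

definition H2_hdt_norm :: "real \<Rightarrow> real \<Rightarrow> (real \<Rightarrow> real) \<Rightarrow> (real \<Rightarrow> real) \<Rightarrow> real" where
  "H2_hdt_norm h dt g g2 =
     sqrt ((L2_norm_T g)\<^sup>2 + h ^ 4 / dt * (L2_norm_T g2)\<^sup>2)"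

definition is_mesh :: "(nat \<Rightarrow> real) \<Rightarrow> nat \<Rightarrow> real \<Rightarrow> bool" where
  "is_mesh p n L \<longleftrightarrow> 1 \<le> n \<and> p 0 = 0 \<and> p n = L \<and> (\<forall>j<n. p j < p (Suc j))"

definition mesh_size :: "(nat \<Rightarrow> real) \<Rightarrow> nat \<Rightarrow> real" where
  "mesh_size p n = Max ((\<lambda>j. p (Suc j) - p j) ` {..<n})"

definition spline23 :: "(nat \<Rightarrow> real) \<Rightarrow> nat \<Rightarrow> (real \<Rightarrow> real) \<Rightarrow> (real \<Rightarrow> real) \<Rightarrow> (real \<Rightarrow> real) \<Rightarrow> bool" where
  "spline23 xs M s s1 s2 \<longleftrightarrow> periodic1 s \<and>
     (\<forall>x. (s has_real_derivative s1 x) (at x)) \<and>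
     (\<forall>x. (s1 has_real_derivative s2 x) (at x)) \<and> continuous_on UNIV s2 \<and>
     (\<forall>j<M. \<exists>a b c d. \<forall>x\<in>{xs j..xs (Suc j)}. s x = a + b * x + c * x\<^sup>2 + d * x ^ 3)"

end

theory Submission
  imports Defs
begin

text \<open>
  Let e = g - P_h g. It vanishes at every node and (P_h g)'' is affine on each cell, so
  integrating by parts twice over a cell leaves only the boundary term [(P_h g)'' e']; these
  terms telescope to zero by periodicity, whence \<parallel>g''\<parallel>^2 = \<parallel>(P_h g)''\<parallel>^2 + \<parallel>e''\<parallel>^2.
  As e vanishes at both ends of each cell, Rolle's theorem, Cauchy-Schwarz and the mean value
  theorem give \<parallel>e\<parallel>^2 \<le> h^4 \<parallel>e''\<parallel>^2. In Young's inequality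
  \<parallel>P_h g\<parallel>^2 \<le> (1 + \<Delta>t) \<parallel>g\<parallel>^2 + (1 + 1/\<Delta>t) \<parallel>e\<parallel>^2 the surplus (1 + 1/\<Delta>t) h^4 \<parallel>e''\<parallel>^2 is
  then paid for by (h^4/\<Delta>t) (\<parallel>g''\<parallel>^2 - \<parallel>(P_h g)''\<parallel>^2) + \<Delta>t (h^4/\<Delta>t) \<parallel>g''\<parallel>^2, so the
  squared discrete norm grows at most by the factor 1 + \<Delta>t, and C = 1 works.
\<close>

lemma integral_increment:
  fixes f :: "real \<Rightarrow> 'a::banach"
  assumes "f integrable_on {a..b}" "a \<le> u" "u \<le> v" "v \<le> b"
  shows "integral {a..v} f - integral {a..u} f = integral {u..v} f"
proof -
  have "f integrable_on {a..v}"
    using integrable_on_subinterval[OF assms(1)] assms by auto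
  from Henstock_Kurzweil_Integration.integral_combine[OF \<open>a \<le> u\<close> \<open>u \<le> v\<close> this]
  show ?thesis by (simp add: algebra_simps)
qed

lemma integral_sum_cells:
  fixes f :: "real \<Rightarrow> 'a::banach"
  assumes "\<And>j. j < n \<Longrightarrow> p j \<le> p (Suc j)" and "f integrable_on {p 0..p n}"
  shows "integral {p 0..p n} f = (\<Sum>j<n. integral {p j..p (Suc j)} f)"
  using assms
proof (induction n)
  case (Suc n)
  have "p 0 \<le> p n"
    by (rule lift_Suc_mono_le_ivl[of "{..<n}"]) (use Suc.prems(1) in auto)
  moreover have "p n \<le> p (Suc n)"
    using Suc.prems(1) by simp
  ultimately have "integral {p 0..p (Suc n)} f = integral {p 0..p n} f + integral {p n..p (Suc n)} f"
    and "f integrable_on {p 0..p n}"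
    using Henstock_Kurzweil_Integration.integral_combine[OF _ _ Suc.prems(2)]
      integrable_on_subinterval[OF Suc.prems(2)] by auto
  then show ?case
    using Suc.IH Suc.prems(1) by simp
qed simp

lemma square_integral_le:
  fixes f :: "real \<Rightarrow> real"
  assumes "c \<le> d" and f: "f integrable_on {c..d}" and f2: "(\<lambda>x. (f x)\<^sup>2) integrable_on {c..d}"
  shows "(integral {c..d} f)\<^sup>2 \<le> (d - c) * integral {c..d} (\<lambda>x. (f x)\<^sup>2)"
proof (cases "c = d")
  case False
  with \<open>c \<le> d\<close> have len: "d - c > 0" by simp
  define I where "I = integral {c..d} f"
  define J where "J = integral {c..d} (\<lambda>x. (f x)\<^sup>2)"
  define m where "m = I / (d - c)"
  have "(\<lambda>x. (f x - m)\<^sup>2) = (\<lambda>x. (f x)\<^sup>2 - 2 * m * f x + m\<^sup>2)"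
    by (auto simp: power2_eq_square algebra_simps)
  moreover have "((\<lambda>x. (f x)\<^sup>2 - 2 * m * f x + m\<^sup>2) has_integral J - 2 * m * I + m\<^sup>2 * (d - c)) {c..d}"
    unfolding I_def J_def using \<open>c \<le> d\<close> has_integral_const_real[of "m\<^sup>2" c d]
    by (intro has_integral_add has_integral_diff has_integral_mult_right integrable_integral f f2)
       (simp add: mult.commute)
  ultimately have "0 \<le> J - 2 * m * I + m\<^sup>2 * (d - c)"
    by (metis has_integral_nonneg zero_le_power2)
  also have "J - 2 * m * I + m\<^sup>2 * (d - c) = ((d - c) * J - I\<^sup>2) / (d - c)"
    using len unfolding m_def by (simp add: divide_simps power2_eq_square)
  finally show ?thesis
    using len unfolding I_def J_def by (simp add: zero_le_divide_iff)
qed simp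

lemma square_integral_le_of_subinterval:
  fixes f :: "real \<Rightarrow> real"
  assumes "a \<le> u" "u \<le> v" "v \<le> b" and "(f has_integral D) {u..v}"
    and f2: "(\<lambda>x. (f x)\<^sup>2) integrable_on {a..b}"
  shows "D\<^sup>2 \<le> (b - a) * integral {a..b} (\<lambda>x. (f x)\<^sup>2)"
proof -
  have f2_uv: "(\<lambda>x. (f x)\<^sup>2) integrable_on {u..v}"
    using integrable_on_subinterval[OF f2] assms(1-3) by auto
  have "D\<^sup>2 \<le> (v - u) * integral {u..v} (\<lambda>x. (f x)\<^sup>2)"
    using square_integral_le[OF \<open>u \<le> v\<close> has_integral_integrable[OF assms(4)] f2_uv] assms(4)
    by (simp add: integral_unique)
  also have "\<dots> \<le> (b - a) * integral {a..b} (\<lambda>x. (f x)\<^sup>2)"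
    using assms(1-3) f2 f2_uv by (intro mult_mono integral_subset_le integral_nonneg) auto
  finally show ?thesis .
qed

lemma absolutely_integrable_continuous_mult:
  fixes f g :: "real \<Rightarrow> real"
  assumes "f absolutely_integrable_on {a..b}" "continuous_on {a..b} g"
  shows "(\<lambda>x. g x * f x) absolutely_integrable_on {a..b}"
proof (rule absolutely_integrable_bounded_measurable_product_real)
  show "g \<in> borel_measurable (lebesgue_on {a..b})"
    by (rule continuous_imp_measurable_on_sets_lebesgue) (use assms in auto)
  show "bounded (g ` {a..b})"
    by (rule compact_imp_bounded, rule compact_continuous_image) (use assms in auto)
qed (use assms in auto)

lemma abs_integral_affine_weight_le:
  fixes f :: "real \<Rightarrow> real"
  assumes f: "f absolutely_integrable_on {u..v}" and c: "c \<in> {u..v}"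
  shows "\<bar>integral {u..v} (\<lambda>x. (c - x) * f x)\<bar> \<le> (v - u) * integral {u..v} (\<lambda>x. \<bar>f x\<bar>)"
proof -
  have "(\<lambda>x. (c - x) * f x) absolutely_integrable_on {u..v}"
    by (rule absolutely_integrable_continuous_mult[OF f]) (intro continuous_intros)
  then have "\<bar>integral {u..v} (\<lambda>x. (c - x) * f x)\<bar> \<le> integral {u..v} (\<lambda>x. (v - u) * \<bar>f x\<bar>)"
  proof (intro integral_norm_bound_integral[where 'a=real, simplified])
    fix x assume "x \<in> {u..v}"
    with c show "\<bar>(c - x) * f x\<bar> \<le> (v - u) * \<bar>f x\<bar>"
      by (auto simp: abs_mult intro!: mult_right_mono)
  qed (use f in \<open>auto simp: absolutely_integrable_on_def intro: integrable_on_mult_right\<close>)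
  then show ?thesis
    by simp
qed

lemma has_real_derivative_by_remainder_bound:
  fixes F A :: "real \<Rightarrow> real"
  assumes rem: "\<And>z. z \<in> S \<Longrightarrow> \<bar>F z - F y - (z - y) * D\<bar> \<le> \<bar>z - y\<bar> * \<bar>A z - A y\<bar>"
    and A: "continuous (at y within S) A"
  shows "(F has_real_derivative D) (at y within S)"
proof -
  have "((\<lambda>z. (F z - F y) / (z - y) - D) \<longlongrightarrow> 0) (at y within S)"
  proof (rule Lim_null_comparison)
    show "\<forall>\<^sub>F z in at y within S. norm ((F z - F y) / (z - y) - D) \<le> \<bar>A z - A y\<bar>"
      unfolding eventually_at_filter
    proof (intro always_eventually allI impI)
      fix z assume "z \<noteq> y" "z \<in> S"
      then have "(F z - F y) / (z - y) - D = (F z - F y - (z - y) * D) / (z - y)"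
        by (simp add: field_simps)
      with rem[OF \<open>z \<in> S\<close>] \<open>z \<noteq> y\<close> show "norm ((F z - F y) / (z - y) - D) \<le> \<bar>A z - A y\<bar>"
        by (simp add: abs_divide divide_le_eq mult.commute)
    qed
    show "((\<lambda>z. \<bar>A z - A y\<bar>) \<longlongrightarrow> 0) (at y within S)"
      using A unfolding continuous_within by (intro tendsto_rabs_zero LIM_zero)
  qed
  then show ?thesis
    by (simp add: has_field_derivative_iff Lim_null[symmetric])
qed

section \<open>Functions vanishing at both ends of an interval\<close>

lemma first_moment_primitive_remainder:
  fixes f :: "real \<Rightarrow> real" and a :: real
  defines "W \<equiv> \<lambda>y. y * integral {a..y} f - integral {a..y} (\<lambda>x. x * f x)"
  assumes f: "f absolutely_integrable_on {a..b}"
    and uv: "a \<le> u" "u \<le> v" "v \<le> b" and c: "c = u \<or> c = v"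
  shows "\<bar>W v - W u - (v - u) * integral {a..c} f\<bar> \<le> (v - u) * integral {u..v} (\<lambda>x. \<bar>f x\<bar>)"
proof -
  define k where "k = u + v - c"
  have "(\<lambda>x. x * f x) absolutely_integrable_on {a..b}"
    by (rule absolutely_integrable_continuous_mult[OF f]) (intro continuous_intros)
  then have fi: "f integrable_on {a..b}" and xfi: "(\<lambda>x. x * f x) integrable_on {a..b}"
    using f by (auto simp: absolutely_integrable_on_def)
  have fuv: "f absolutely_integrable_on {u..v}"
    using absolutely_integrable_on_subinterval[OF f] uv by auto
  moreover have "(\<lambda>x. x * f x) integrable_on {u..v}"
    using integrable_on_subinterval[OF xfi] uv by auto
  ultimately have "integral {u..v} (\<lambda>x. (k - x) * f x)
      = k * integral {u..v} f - integral {u..v} (\<lambda>x. x * f x)"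
    unfolding left_diff_distrib
    by (subst integral_diff) (auto simp: absolutely_integrable_on_def intro: integrable_on_mult_right)
  also have "\<dots> = W v - W u - (v - u) * integral {a..c} f"
    using integral_increment[OF fi uv] integral_increment[OF xfi uv] c
    unfolding W_def k_def by (auto simp: algebra_simps)
  finally have "\<bar>W v - W u - (v - u) * integral {a..c} f\<bar> = \<bar>integral {u..v} (\<lambda>x. (k - x) * f x)\<bar>"
    by simp
  also have "\<dots> \<le> (v - u) * integral {u..v} (\<lambda>x. \<bar>f x\<bar>)"
    by (rule abs_integral_affine_weight_le[OF fuv]) (use c uv in \<open>auto simp: k_def\<close>)
  finally show ?thesis .
qed

text \<open>
  As f is merely integrable, W is differentiated by hand: by the previous lemma its
  first-order remainder between y and z is bounded by |z - y| times the increment of the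
  continuous primitive of |f|.
\<close>
lemma cauchy_repeated_integral:
  fixes f :: "real \<Rightarrow> real"
  assumes "a \<le> b" and f: "f absolutely_integrable_on {a..b}"
  shows "((\<lambda>x. (b - x) * f x) has_integral integral {a..b} (\<lambda>t. integral {a..t} f)) {a..b}"
proof -
  define I where "I y = integral {a..y} f" for y
  define W where "W y = y * I y - integral {a..y} (\<lambda>x. x * f x)" for y
  define A where "A y = integral {a..y} (\<lambda>x. \<bar>f x\<bar>)" for y
  have "(\<lambda>x. x * f x) absolutely_integrable_on {a..b}"
    by (rule absolutely_integrable_continuous_mult[OF f]) (intro continuous_intros)
  then have fi: "f integrable_on {a..b}" and xfi: "(\<lambda>x. x * f x) integrable_on {a..b}"
    and afi: "(\<lambda>x. \<bar>f x\<bar>) integrable_on {a..b}"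
    using f by (auto simp: absolutely_integrable_on_def)
  have remainder: "\<bar>W v - W u - (v - u) * I c\<bar> \<le> (v - u) * (A v - A u)"
    if "a \<le> u" "u \<le> v" "v \<le> b" "c = u \<or> c = v" for u v c
    using first_moment_primitive_remainder[OF f that] integral_increment[OF afi that(1-3)]
    unfolding W_def I_def A_def by simp
  have "(W has_real_derivative I y) (at y within {a..b})" if y: "y \<in> {a..b}" for y
  proof (rule has_real_derivative_by_remainder_bound)
    fix z assume z: "z \<in> {a..b}"
    have "(z - y) * (A z - A y) \<le> \<bar>z - y\<bar> * \<bar>A z - A y\<bar>"
      by (metis abs_ge_self abs_mult)
    then show "\<bar>W z - W y - (z - y) * I y\<bar> \<le> \<bar>z - y\<bar> * \<bar>A z - A y\<bar>"
      using remainder[of y z y] remainder[of z y y] y z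
      by (cases "y \<le> z") (auto simp: algebra_simps abs_minus_commute)
  next
    show "continuous (at y within {a..b}) A"
      using indefinite_integral_continuous_1[OF afi] y
      unfolding A_def continuous_on_eq_continuous_within by blast
  qed
  then have "(I has_integral W b - W a) {a..b}"
    by (intro fundamental_theorem_of_calculus[OF \<open>a \<le> b\<close>])
      (simp flip: has_real_derivative_iff_has_vector_derivative)
  moreover have "W a = 0"
    unfolding W_def I_def by simp
  moreover have "((\<lambda>x. (b - x) * f x) has_integral W b) {a..b}"
    unfolding W_def I_def left_diff_distrib
    by (intro has_integral_diff has_integral_mult_right integrable_integral fi xfi)
  ultimately show ?thesis
    unfolding I_def by (simp add: integral_unique)
qed

lemma integral_affine_mult_second_deriv:
  fixes E E' E'' :: "real \<Rightarrow> real"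
  assumes "a \<le> b"
    and deriv: "\<And>x. x \<in> {a..b} \<Longrightarrow> (E has_real_derivative E' x) (at x within {a..b})"
    and "E a = 0" "E b = 0"
    and integrable: "E'' absolutely_integrable_on {a..b}"
    and second_deriv: "\<And>y. y \<in> {a..b} \<Longrightarrow> (E'' has_integral E' y - E' a) {a..y}"
  shows "integral {a..b} (\<lambda>x. (\<alpha> + \<beta> * x) * E'' x) = (\<alpha> + \<beta> * b) * E' b - (\<alpha> + \<beta> * a) * E' a"
proof -
  have "(E' has_integral E b - E a) {a..b}"
    by (rule fundamental_theorem_of_calculus[OF \<open>a \<le> b\<close>])
      (use deriv in \<open>simp flip: has_real_derivative_iff_has_vector_derivative\<close>)
  from has_integral_diff[OF this has_integral_const_real[of "E' a" a b]]
  have "((\<lambda>t. E' t - E' a) has_integral - (b - a) * E' a) {a..b}"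
    using \<open>a \<le> b\<close> \<open>E a = 0\<close> \<open>E b = 0\<close> by (simp add: algebra_simps)
  then have "((\<lambda>t. integral {a..t} E'') has_integral - (b - a) * E' a) {a..b}"
    by (rule has_integral_eq[rotated]) (simp add: second_deriv integral_unique[symmetric])
  then have weight: "((\<lambda>x. (b - x) * E'' x) has_integral - (b - a) * E' a) {a..b}"
    using cauchy_repeated_integral[OF \<open>a \<le> b\<close> integrable] by (simp add: integral_unique)
  have "(\<lambda>x. (\<alpha> + \<beta> * x) * E'' x) = (\<lambda>x. (\<alpha> + \<beta> * b) * E'' x - \<beta> * ((b - x) * E'' x))"
    by (auto simp: algebra_simps)
  moreover have "((\<lambda>x. (\<alpha> + \<beta> * b) * E'' x - \<beta> * ((b - x) * E'' x)) has_integral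
      (\<alpha> + \<beta> * b) * (E' b - E' a) + \<beta> * (b - a) * E' a) {a..b}"
    using has_integral_diff[OF has_integral_mult_right[OF second_deriv[of b]] has_integral_mult_right[OF weight],
        of "\<alpha> + \<beta> * b" \<beta>] \<open>a \<le> b\<close>
    by (simp add: algebra_simps)
  ultimately show ?thesis
    by (simp add: integral_unique algebra_simps)
qed

lemma poincare_vanishing_endpoints:
  fixes E E' E'' :: "real \<Rightarrow> real"
  assumes "a \<le> b"
    and deriv: "\<And>x. x \<in> {a..b} \<Longrightarrow> (E has_real_derivative E' x) (at x within {a..b})"
    and "E a = 0" "E b = 0"
    and second_deriv: "\<And>x y. a \<le> x \<Longrightarrow> x \<le> y \<Longrightarrow> y \<le> b \<Longrightarrow> (E'' has_integral E' y - E' x) {x..y}"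
    and second_deriv_sq: "(\<lambda>x. (E'' x)\<^sup>2) integrable_on {a..b}"
  shows "integral {a..b} (\<lambda>x. (E x)\<^sup>2) \<le> (b - a) ^ 4 * integral {a..b} (\<lambda>x. (E'' x)\<^sup>2)"
proof (cases "a = b")
  case False
  with \<open>a \<le> b\<close> have "a < b" by simp
  define I where "I = integral {a..b} (\<lambda>x. (E'' x)\<^sup>2)"
  obtain \<xi> where \<xi>: "\<xi> \<in> {a..b}" "E' \<xi> = 0"
  proof -
    obtain \<xi> where "\<xi> \<in> {a..b}" "E b - E a = E' \<xi> * (b - a)"
      using mvt_very_simple[OF \<open>a \<le> b\<close>, of E "\<lambda>x. (*) (E' x)"] deriv
      by (auto simp: has_field_derivative_def)
    with that \<open>a < b\<close> \<open>E a = 0\<close> \<open>E b = 0\<close> show thesis by simp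
  qed
  have increment: "(E' v - E' u)\<^sup>2 \<le> (b - a) * I" if "a \<le> u" "u \<le> v" "v \<le> b" for u v
    unfolding I_def by (rule square_integral_le_of_subinterval[OF that second_deriv[OF that] second_deriv_sq])
  have deriv_bound: "(E' x)\<^sup>2 \<le> (b - a) * I" if "x \<in> {a..b}" for x
    using increment[of \<xi> x] increment[of x \<xi>] \<xi> that
    by (cases "\<xi> \<le> x") (auto simp: power2_commute)
  have bound: "(E x)\<^sup>2 \<le> (b - a) ^ 3 * I" if x: "x \<in> {a..b}" for x
  proof -
    have "(E has_derivative (*) (E' z)) (at z within {a..x})" if "z \<in> {a..x}" for z
      using deriv[of z] x that unfolding has_field_derivative_def
      by (auto intro: has_derivative_subset)
    then obtain z where z: "z \<in> {a..x}" "E x - E a = E' z * (x - a)"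
      using mvt_very_simple[of a x E "\<lambda>z. (*) (E' z)"] x by auto
    then have "(E x)\<^sup>2 = (x - a)\<^sup>2 * (E' z)\<^sup>2"
      using \<open>E a = 0\<close> by (simp add: power_mult_distrib mult.commute)
    also have "\<dots> \<le> (b - a)\<^sup>2 * ((b - a) * I)"
      using x z deriv_bound[of z] by (intro mult_mono power_mono) auto
    finally show ?thesis
      by (simp add: power2_eq_square power3_eq_cube mult.assoc)
  qed
  have "continuous_on {a..b} E"
    using deriv by (rule DERIV_continuous_on)
  then have "integral {a..b} (\<lambda>x. (E x)\<^sup>2) \<le> integral {a..b} (\<lambda>x. (b - a) ^ 3 * I)"
    by (intro integral_le integrable_continuous_interval continuous_intros bound) auto
  also have "\<dots> = (b - a) ^ 4 * I"
    using \<open>a \<le> b\<close> by (simp add: power_Suc2 power3_eq_cube power4_eq_xxxx mult_ac)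
  finally show ?thesis
    unfolding I_def .
qed simp

lemma periodic1_deriv:
  assumes "periodic1 f" and deriv: "\<And>x. (f has_real_derivative f' x) (at x)"
  shows "periodic1 f'"
  unfolding periodic1_def
proof
  fix x
  have "((\<lambda>y. f (y + 1)) has_real_derivative f' (x + 1)) (at x)"
    using deriv[of "x + 1"] by (simp add: DERIV_shift)
  moreover have "(\<lambda>y. f (y + 1)) = f"
    using \<open>periodic1 f\<close> unfolding periodic1_def by auto
  ultimately show "f' (x + 1) = f' x"
    using deriv[of x] DERIV_unique by metis
qed

lemma second_deriv_of_cubic:
  fixes s s1 s2 :: "real \<Rightarrow> real"
  assumes "a < b"
    and cubic: "\<And>x. x \<in> {a..b} \<Longrightarrow> s x = c0 + c1 * x + c2 * x\<^sup>2 + c3 * x ^ 3"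
    and s: "\<And>x. x \<in> {a<..<b} \<Longrightarrow> (s has_real_derivative s1 x) (at x)"
    and s1: "\<And>x. x \<in> {a<..<b} \<Longrightarrow> (s1 has_real_derivative s2 x) (at x)"
    and "continuous_on {a..b} s2" and "x \<in> {a..b}"
  shows "s2 x = 2 * c2 + 6 * c3 * x"
proof -
  have s1_eq: "s1 x = c1 + 2 * c2 * x + 3 * c3 * x\<^sup>2" if x: "x \<in> {a<..<b}" for x
  proof -
    have "((\<lambda>x. c0 + c1 * x + c2 * x\<^sup>2 + c3 * x ^ 3) has_real_derivative
        c1 + 2 * c2 * x + 3 * c3 * x\<^sup>2) (at x)"
      by (auto intro!: derivative_eq_intros simp: power2_eq_square)
    then have "(s has_real_derivative c1 + 2 * c2 * x + 3 * c3 * x\<^sup>2) (at x)"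
      by (rule has_field_derivative_transform_within_open[where S="{a<..<b}"]) (use x cubic in auto)
    with s[OF x] show ?thesis
      using DERIV_unique by metis
  qed
  have "s2 y = 2 * c2 + 6 * c3 * y" if y: "y \<in> {a<..<b}" for y
  proof -
    have "((\<lambda>x. c1 + 2 * c2 * x + 3 * c3 * x\<^sup>2) has_real_derivative 2 * c2 + 6 * c3 * y) (at y)"
      by (auto intro!: derivative_eq_intros simp: power2_eq_square)
    then have "(s1 has_real_derivative 2 * c2 + 6 * c3 * y) (at y)"
      by (rule has_field_derivative_transform_within_open[where S="{a<..<b}"]) (use y s1_eq in auto)
    with s1[OF y] show ?thesis
      using DERIV_unique by metis
  qed
  moreover have "closure {a<..<b} = {a..b}"
    using \<open>a < b\<close> by simp
  moreover have "continuous_on {a..b} (\<lambda>y. s2 y - (2 * c2 + 6 * c3 * y))"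
    using \<open>continuous_on {a..b} s2\<close> by (intro continuous_intros)
  ultimately have "s2 x - (2 * c2 + 6 * c3 * x) = 0"
    using continuous_constant_on_closure[of "{a<..<b}" "\<lambda>y. s2 y - (2 * c2 + 6 * c3 * y)" 0 x]
      \<open>x \<in> {a..b}\<close> by auto
  then show ?thesis
    by simp
qed

lemma mesh_step_le_mesh_size:
  "j < n \<Longrightarrow> p (Suc j) - p j \<le> mesh_size p n"
  unfolding mesh_size_def by (rule Max_ge) auto

lemma mesh_size_pos:
  assumes "is_mesh p n L"
  shows "0 < mesh_size p n"
proof -
  from assms have "0 < n" "p 0 < p (Suc 0)"
    unfolding is_mesh_def by auto
  with mesh_step_le_mesh_size[of 0 n p] show ?thesis
    by linarith
qed

lemma integral_square_nonneg: "0 \<le> integral S (\<lambda>x. (f x)\<^sup>2 :: real)"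
  by (cases "(\<lambda>x. (f x)\<^sup>2) integrable_on S") (auto intro: integral_nonneg simp: not_integrable_integral)

lemma young_square_le:
  fixes x y t :: real
  assumes "0 < t"
  shows "y\<^sup>2 \<le> (1 + t) * x\<^sup>2 + (1 + 1 / t) * (x - y)\<^sup>2"
proof -
  have "(1 + t) * x\<^sup>2 + (1 + 1 / t) * (x - y)\<^sup>2 - y\<^sup>2 = (t * x + (x - y))\<^sup>2 / t"
    using assms by (simp add: field_simps power2_eq_square)
  with assms show ?thesis
    by (metis diff_ge_0_iff_ge divide_nonneg_pos less_le zero_le_power2)
qed

lemma integral_square_young_le:
  fixes g s :: "real \<Rightarrow> real"
  assumes "0 < t" "continuous_on {a..b} g" "continuous_on {a..b} s"
  shows "integral {a..b} (\<lambda>x. (s x)\<^sup>2)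
    \<le> (1 + t) * integral {a..b} (\<lambda>x. (g x)\<^sup>2) + (1 + 1 / t) * integral {a..b} (\<lambda>x. (g x - s x)\<^sup>2)"
proof -
  have "integral {a..b} (\<lambda>x. (s x)\<^sup>2)
      \<le> integral {a..b} (\<lambda>x. (1 + t) * (g x)\<^sup>2 + (1 + 1 / t) * (g x - s x)\<^sup>2)"
    using assms by (intro integral_le young_square_le integrable_continuous_interval continuous_intros) auto
  also have "\<dots> = (1 + t) * integral {a..b} (\<lambda>x. (g x)\<^sup>2) + (1 + 1 / t) * integral {a..b} (\<lambda>x. (g x - s x)\<^sup>2)"
    using assms(2,3) by (subst integral_add) (auto intro!: integrable_continuous_interval continuous_intros)
  finally show ?thesis .
qed

lemma H2_hdt_norm_le_one_plus_dt:
  fixes g s g2 s2 :: "real \<Rightarrow> real"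
  assumes "0 < dt" and "continuous_on {0..1} g" "continuous_on {0..1} s"
    and pythagoras: "integral {0..1} (\<lambda>x. (s2 x)\<^sup>2) + integral {0..1} (\<lambda>x. (g2 x - s2 x)\<^sup>2)
      = integral {0..1} (\<lambda>x. (g2 x)\<^sup>2)"
    and error: "integral {0..1} (\<lambda>x. (g x - s x)\<^sup>2) \<le> h ^ 4 * integral {0..1} (\<lambda>x. (g2 x - s2 x)\<^sup>2)"
  shows "H2_hdt_norm h dt s s2 \<le> (1 + dt) * H2_hdt_norm h dt g g2"
proof -
  define K where "K = h ^ 4 / dt"
  define G where "G = integral {0..1} (\<lambda>x. (g x)\<^sup>2)"
  define S where "S = integral {0..1} (\<lambda>x. (s x)\<^sup>2)"
  define Err where "Err = integral {0..1} (\<lambda>x. (g x - s x)\<^sup>2)"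
  define G2 where "G2 = integral {0..1} (\<lambda>x. (g2 x)\<^sup>2)"
  define S2 where "S2 = integral {0..1} (\<lambda>x. (s2 x)\<^sup>2)"
  define Err2 where "Err2 = integral {0..1} (\<lambda>x. (g2 x - s2 x)\<^sup>2)"
  have young: "S \<le> (1 + dt) * G + Err + Err / dt"
    using integral_square_young_le[OF assms(1-3)] unfolding S_def G_def Err_def
    by (simp add: algebra_simps)
  have pyth: "S2 + Err2 = G2"
    using pythagoras unfolding S2_def Err2_def G2_def .
  have "K \<ge> 0"
    using \<open>0 < dt\<close> unfolding K_def by simp
  have "Err / dt \<le> K * Err2" and "Err \<le> dt * K * Err2"
    using error \<open>0 < dt\<close> unfolding K_def Err_def Err2_def by (simp_all add: divide_right_mono)
  moreover have "dt * K * Err2 \<le> dt * K * G2"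
    using pyth integral_square_nonneg[of "{0..1}" s2] \<open>0 < dt\<close> \<open>K \<ge> 0\<close>
    unfolding S2_def by (intro mult_left_mono) auto
  moreover have "K * S2 = K * G2 - K * Err2" and "(1 + dt) * (G + K * G2) = (1 + dt) * G + K * G2 + dt * K * G2"
    using pyth by (auto simp: algebra_simps)
  ultimately have "S + K * S2 \<le> (1 + dt) * (G + K * G2)"
    using young by linarith
  also have "\<dots> \<le> (1 + dt)\<^sup>2 * (G + K * G2)"
    using \<open>0 < dt\<close> \<open>K \<ge> 0\<close> integral_square_nonneg[of "{0..1}" g] integral_square_nonneg[of "{0..1}" g2]
    unfolding G_def G2_def by (intro mult_right_mono) (auto simp: power2_eq_square)
  finally have "sqrt (S + K * S2) \<le> sqrt ((1 + dt)\<^sup>2 * (G + K * G2))"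
    by (rule real_sqrt_le_mono)
  also have "\<dots> = (1 + dt) * sqrt (G + K * G2)"
    using \<open>0 < dt\<close> by (simp add: real_sqrt_mult)
  finally show ?thesis
    unfolding H2_hdt_norm_def L2_norm_T_def K_def S_def S2_def G_def G2_def
    by (simp add: integral_square_nonneg)
qed

section \<open>Periodic spline interpolants\<close>

locale periodic_spline_interpolant =
  fixes xs :: "nat \<Rightarrow> real" and M :: nat and g g1 g2 s s1 s2 :: "real \<Rightarrow> real"
  assumes mesh: "is_mesh xs M 1"
    and H2: "H2_T g g1 g2"
    and spline: "spline23 xs M s s1 s2"
    and interpolates: "\<forall>j<M. s (xs j) = g (xs j)"
begin

lemma node_mono:
  assumes "i \<le> k" "k \<le> M"
  shows "xs i \<le> xs k"
  by (rule lift_Suc_mono_le_ivl[of "{..<M}"]) (use mesh assms in \<open>auto simp: is_mesh_def less_imp_le\<close>)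

lemma integral_sum_mesh_cells:
  fixes f :: "real \<Rightarrow> real"
  assumes "f integrable_on {0..1}"
  shows "integral {0..1} f = (\<Sum>j<M. integral {xs j..xs (Suc j)} f)"
  using integral_sum_cells[of M xs f] assms mesh unfolding is_mesh_def by (simp add: less_imp_le)

lemma cell_nonempty: "j < M \<Longrightarrow> xs j < xs (Suc j)"
  using mesh unfolding is_mesh_def by auto

lemma cell_subset: "j < M \<Longrightarrow> {xs j..xs (Suc j)} \<subseteq> {0..1}"
  using node_mono[of 0 j] node_mono[of "Suc j" M] mesh unfolding is_mesh_def by auto

lemma error_deriv: "((\<lambda>x. g x - s x) has_real_derivative g1 x - s1 x) (at x)"
  using H2 spline unfolding H2_T_def spline23_def by (intro DERIV_diff) auto

lemma continuous_g: "continuous_on A g"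
  using H2 unfolding H2_T_def by (meson DERIV_isCont continuous_at_imp_continuous_on)

lemma continuous_s: "continuous_on A s"
  using spline unfolding spline23_def by (meson DERIV_isCont continuous_at_imp_continuous_on)

lemma continuous_s2: "continuous_on A s2"
  using spline unfolding spline23_def by (blast intro: continuous_on_subset)

lemma error_vanishes_at_nodes:
  assumes "j \<le> M"
  shows "g (xs j) - s (xs j) = 0"
proof (cases "j = M")
  case True
  have "periodic1 g" "periodic1 s" "xs 0 = 0" "xs M = 1" "0 < M"
    using H2 spline mesh unfolding H2_T_def spline23_def is_mesh_def by auto
  then have "g (xs M) - s (xs M) = g (xs 0) - s (xs 0)"
    unfolding periodic1_def by (metis add_0)
  with True interpolates \<open>0 < M\<close> show ?thesis
    by simp
next
  case False
  with assms interpolates show ?thesis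
    by simp
qed

lemma error_second_deriv:
  assumes "a \<le> b"
  shows "((\<lambda>x. g2 x - s2 x) has_integral (g1 b - s1 b) - (g1 a - s1 a)) {a..b}"
proof -
  have "(s2 has_integral s1 b - s1 a) {a..b}"
    using spline \<open>a \<le> b\<close> unfolding spline23_def
    by (intro fundamental_theorem_of_calculus)
      (auto intro: has_field_derivative_at_within simp flip: has_real_derivative_iff_has_vector_derivative)
  moreover have "(g2 has_integral g1 b - g1 a) {a..b}"
    using H2 \<open>a \<le> b\<close> unfolding H2_T_def by auto
  ultimately have "((\<lambda>x. g2 x - s2 x) has_integral (g1 b - g1 a) - (s1 b - s1 a)) {a..b}"
    by (intro has_integral_diff)
  then show ?thesis
    by (simp add: algebra_simps)
qed

lemma periodic_error_first_deriv: "periodic1 (\<lambda>x. g1 x - s1 x)"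
proof (rule periodic1_deriv[OF _ error_deriv])
  show "periodic1 (\<lambda>x. g x - s x)"
    using H2 spline unfolding H2_T_def spline23_def periodic1_def by simp
qed

lemma periodic_second_deriv: "periodic1 s2"
proof -
  have "periodic1 s1"
    by (rule periodic1_deriv[of s]) (use spline in \<open>auto simp: spline23_def\<close>)
  then show ?thesis
    by (rule periodic1_deriv) (use spline in \<open>auto simp: spline23_def\<close>)
qed

lemma second_deriv_absolutely_integrable: "g2 absolutely_integrable_on {0..1}"
  using H2 unfolding H2_T_def L2_T_def by simp

lemma error_second_deriv_absolutely_integrable:
  "(\<lambda>x. g2 x - s2 x) absolutely_integrable_on {0..1}"
  using second_deriv_absolutely_integrable absolutely_integrable_continuous_real[OF continuous_s2]
  by (rule set_integral_diff(1))

lemma error_second_deriv_square_integrable: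
  "(\<lambda>x. (g2 x - s2 x)\<^sup>2) integrable_on {0..1}"
proof -
  have "(\<lambda>x. s2 x * g2 x) absolutely_integrable_on {0..1}"
    using second_deriv_absolutely_integrable continuous_s2 by (rule absolutely_integrable_continuous_mult)
  moreover have "(\<lambda>x. (g2 x)\<^sup>2) integrable_on {0..1}"
    using H2 unfolding H2_T_def L2_T_def by simp
  moreover have "(\<lambda>x. (s2 x)\<^sup>2) integrable_on {0..1}"
    by (intro integrable_continuous_interval continuous_intros continuous_s2)
  ultimately have "(\<lambda>x. (g2 x)\<^sup>2 - 2 * (s2 x * g2 x) + (s2 x)\<^sup>2) integrable_on {0..1}"
    by (intro integrable_add integrable_diff integrable_on_mult_right) (simp_all add: absolutely_integrable_on_def)
  moreover have "(\<lambda>x. (g2 x)\<^sup>2 - 2 * (s2 x * g2 x) + (s2 x)\<^sup>2) = (\<lambda>x. (g2 x - s2 x)\<^sup>2)"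
    by (auto simp: power2_eq_square algebra_simps)
  ultimately show ?thesis
    by simp
qed

lemma second_deriv_affine_on_cell:
  assumes "j < M"
  obtains \<alpha> \<beta> where "\<And>x. x \<in> {xs j..xs (Suc j)} \<Longrightarrow> s2 x = \<alpha> + \<beta> * x"
proof -
  obtain c0 c1 c2 c3 where cubic: "\<And>x. x \<in> {xs j..xs (Suc j)} \<Longrightarrow> s x = c0 + c1 * x + c2 * x\<^sup>2 + c3 * x ^ 3"
    using spline assms unfolding spline23_def by blast
  have "\<And>x. (s has_real_derivative s1 x) (at x)" "\<And>x. (s1 has_real_derivative s2 x) (at x)"
    using spline unfolding spline23_def by auto
  with second_deriv_of_cubic[OF cell_nonempty[OF assms] cubic _ _ continuous_s2] that
  show thesis
    by blast
qed

lemma cell_orthogonality: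
  assumes "j < M"
  shows "integral {xs j..xs (Suc j)} (\<lambda>x. s2 x * (g2 x - s2 x))
    = s2 (xs (Suc j)) * (g1 (xs (Suc j)) - s1 (xs (Suc j))) - s2 (xs j) * (g1 (xs j) - s1 (xs j))"
proof -
  let ?a = "xs j" and ?b = "xs (Suc j)"
  obtain \<alpha> \<beta> where affine: "\<And>x. x \<in> {?a..?b} \<Longrightarrow> s2 x = \<alpha> + \<beta> * x"
    using second_deriv_affine_on_cell[OF assms] by blast
  have "?a \<le> ?b"
    using cell_nonempty[OF assms] by simp
  have deriv: "((\<lambda>x. g x - s x) has_real_derivative g1 x - s1 x) (at x within {?a..?b})" for x
    using error_deriv by (rule has_field_derivative_at_within)
  have second_deriv:
    "((\<lambda>x. g2 x - s2 x) has_integral (g1 y - s1 y) - (g1 ?a - s1 ?a)) {?a..y}" if "y \<in> {?a..?b}" for y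
    using that by (intro error_second_deriv) simp
  have integrable: "(\<lambda>x. g2 x - s2 x) absolutely_integrable_on {?a..?b}"
    using error_second_deriv_absolutely_integrable cell_subset[OF assms]
    by (rule absolutely_integrable_on_subinterval)
  have "integral {?a..?b} (\<lambda>x. s2 x * (g2 x - s2 x))
      = integral {?a..?b} (\<lambda>x. (\<alpha> + \<beta> * x) * (g2 x - s2 x))"
    by (intro integral_cong) (simp add: affine)
  also have "\<dots> = (\<alpha> + \<beta> * ?b) * (g1 ?b - s1 ?b) - (\<alpha> + \<beta> * ?a) * (g1 ?a - s1 ?a)"
    using assms
    by (intro integral_affine_mult_second_deriv[OF \<open>?a \<le> ?b\<close> deriv _ _ integrable second_deriv]
        error_vanishes_at_nodes) auto
  finally show ?thesis
    using affine \<open>?a \<le> ?b\<close> by simp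
qed

lemma second_derivs_orthogonal: "integral {0..1} (\<lambda>x. s2 x * (g2 x - s2 x)) = 0"
proof -
  have "xs 0 = 0" "xs M = 1"
    using mesh unfolding is_mesh_def by auto
  have "(\<lambda>x. s2 x * (g2 x - s2 x)) integrable_on {0..1}"
    using absolutely_integrable_continuous_mult[OF error_second_deriv_absolutely_integrable continuous_s2]
    by (simp add: absolutely_integrable_on_def)
  then have "integral {0..1} (\<lambda>x. s2 x * (g2 x - s2 x))
      = (\<Sum>j<M. integral {xs j..xs (Suc j)} (\<lambda>x. s2 x * (g2 x - s2 x)))"
    by (rule integral_sum_mesh_cells)
  also have "\<dots> = (\<Sum>j<M. s2 (xs (Suc j)) * (g1 (xs (Suc j)) - s1 (xs (Suc j)))
      - s2 (xs j) * (g1 (xs j) - s1 (xs j)))"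
    by (rule sum.cong) (simp_all add: cell_orthogonality)
  also have "\<dots> = s2 1 * (g1 1 - s1 1) - s2 0 * (g1 0 - s1 0)"
    using sum_lessThan_telescope[of "\<lambda>j. s2 (xs j) * (g1 (xs j) - s1 (xs j))" M] \<open>xs 0 = 0\<close> \<open>xs M = 1\<close>
    by simp
  also have "\<dots> = 0"
  proof -
    have "s2 (0 + 1) = s2 0" "g1 (0 + 1) - s1 (0 + 1) = g1 0 - s1 0"
      using periodic_second_deriv periodic_error_first_deriv unfolding periodic1_def by blast+
    then show ?thesis
      by simp
  qed
  finally show ?thesis .
qed

lemma second_deriv_pythagoras:
  "integral {0..1} (\<lambda>x. (s2 x)\<^sup>2) + integral {0..1} (\<lambda>x. (g2 x - s2 x)\<^sup>2)
    = integral {0..1} (\<lambda>x. (g2 x)\<^sup>2)"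
proof -
  have "(\<lambda>x. (s2 x)\<^sup>2) integrable_on {0..1}"
    by (intro integrable_continuous_interval continuous_intros continuous_s2)
  moreover have "(\<lambda>x. s2 x * (g2 x - s2 x)) integrable_on {0..1}"
    using absolutely_integrable_continuous_mult[OF error_second_deriv_absolutely_integrable continuous_s2]
    by (simp add: absolutely_integrable_on_def)
  ultimately have "((\<lambda>x. (s2 x)\<^sup>2 + (g2 x - s2 x)\<^sup>2 + 2 * (s2 x * (g2 x - s2 x))) has_integral
      integral {0..1} (\<lambda>x. (s2 x)\<^sup>2) + integral {0..1} (\<lambda>x. (g2 x - s2 x)\<^sup>2)
        + 2 * integral {0..1} (\<lambda>x. s2 x * (g2 x - s2 x))) {0..1}"
    by (intro has_integral_add has_integral_mult_right integrable_integral
        error_second_deriv_square_integrable)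
  moreover have "(\<lambda>x. (s2 x)\<^sup>2 + (g2 x - s2 x)\<^sup>2 + 2 * (s2 x * (g2 x - s2 x))) = (\<lambda>x. (g2 x)\<^sup>2)"
    by (auto simp: power2_eq_square algebra_simps)
  ultimately show ?thesis
    by (simp add: second_derivs_orthogonal integral_unique)
qed

lemma interpolation_error_le:
  "integral {0..1} (\<lambda>x. (g x - s x)\<^sup>2) \<le> mesh_size xs M ^ 4 * integral {0..1} (\<lambda>x. (g2 x - s2 x)\<^sup>2)"
proof -
  let ?h = "mesh_size xs M"
  have cell: "integral {xs j..xs (Suc j)} (\<lambda>x. (g x - s x)\<^sup>2)
      \<le> ?h ^ 4 * integral {xs j..xs (Suc j)} (\<lambda>x. (g2 x - s2 x)\<^sup>2)" if "j < M" for j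
  proof -
    let ?a = "xs j" and ?b = "xs (Suc j)"
    have "((\<lambda>x. g x - s x) has_real_derivative g1 x - s1 x) (at x within {?a..?b})" for x
      using error_deriv by (rule has_field_derivative_at_within)
    moreover have "(\<lambda>x. (g2 x - s2 x)\<^sup>2) integrable_on {?a..?b}"
      using error_second_deriv_square_integrable cell_subset[OF that] by (rule integrable_on_subinterval)
    ultimately have "integral {?a..?b} (\<lambda>x. (g x - s x)\<^sup>2)
        \<le> (?b - ?a) ^ 4 * integral {?a..?b} (\<lambda>x. (g2 x - s2 x)\<^sup>2)"
      using less_imp_le[OF cell_nonempty[OF that]] error_vanishes_at_nodes[of j] error_vanishes_at_nodes[of "Suc j"] that
      by (intro poincare_vanishing_endpoints[where E'="\<lambda>x. g1 x - s1 x"] error_second_deriv) auto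
    also have "\<dots> \<le> ?h ^ 4 * integral {xs j..xs (Suc j)} (\<lambda>x. (g2 x - s2 x)\<^sup>2)"
      using that less_imp_le[OF cell_nonempty[OF that]] mesh_step_le_mesh_size[OF that]
      by (intro mult_right_mono power_mono integral_square_nonneg) auto
    finally show ?thesis .
  qed
  have "integral {0..1} (\<lambda>x. (g x - s x)\<^sup>2) = (\<Sum>j<M. integral {xs j..xs (Suc j)} (\<lambda>x. (g x - s x)\<^sup>2))"
    by (intro integral_sum_mesh_cells integrable_continuous_interval continuous_intros continuous_g continuous_s)
  also have "\<dots> \<le> (\<Sum>j<M. ?h ^ 4 * integral {xs j..xs (Suc j)} (\<lambda>x. (g2 x - s2 x)\<^sup>2))"
    by (rule sum_mono) (simp add: cell)
  also have "\<dots> = ?h ^ 4 * integral {0..1} (\<lambda>x. (g2 x - s2 x)\<^sup>2)"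
    by (simp add: integral_sum_mesh_cells[OF error_second_deriv_square_integrable] sum_distrib_left)
  finally show ?thesis .
qed

lemma H2_hdt_norm_interpolant_le:
  assumes "0 < dt"
  shows "H2_hdt_norm (mesh_size xs M) dt s s2 \<le> (1 + dt) * H2_hdt_norm (mesh_size xs M) dt g g2"
  using assms continuous_g continuous_s second_deriv_pythagoras interpolation_error_le
  by (rule H2_hdt_norm_le_one_plus_dt)

end

theorem lemma15:
  shows "\<exists>C>0. \<forall>(N::nat) (ts::nat \<Rightarrow> real) (Tend::real) (M::nat) (xs::nat \<Rightarrow> real)
            (g::real \<Rightarrow> real) g1 g2 (s::real \<Rightarrow> real) s1 s2.
     is_mesh ts N Tend \<longrightarrow> mesh_size ts N < 1 \<longrightarrow>
     is_mesh xs M 1 \<longrightarrow>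
     H2_T g g1 g2 \<longrightarrow>
     spline23 xs M s s1 s2 \<longrightarrow> (\<forall>j<M. s (xs j) = g (xs j)) \<longrightarrow>
     H2_hdt_norm (mesh_size xs M) (mesh_size ts N) s s2
       \<le> (1 + C * mesh_size ts N) * H2_hdt_norm (mesh_size xs M) (mesh_size ts N) g g2"
proof (intro exI[of _ 1] conjI allI impI)
  fix N ts Tend M xs g g1 g2 s s1 s2
  assume "is_mesh ts N Tend" and "is_mesh xs M 1" "H2_T g g1 g2" "spline23 xs M s s1 s2"
    "\<forall>j<M. s (xs j) = g (xs j)"
  then interpret periodic_spline_interpolant xs M g g1 g2 s s1 s2
    by unfold_locales
  show "H2_hdt_norm (mesh_size xs M) (mesh_size ts N) s s2
      \<le> (1 + 1 * mesh_size ts N) * H2_hdt_norm (mesh_size xs M) (mesh_size ts N) g g2"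
    using H2_hdt_norm_interpolant_le[OF mesh_size_pos[OF \<open>is_mesh ts N Tend\<close>]] by simp
qed simp

end
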